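(* Every complex $3$-dimensional binary $\mathfrak{perm}$ superalgebra of type $(2,1)$ is a $\mathfrak{perm}$ superalgebra.
   Context: All algebras are over $\mathbb{C}$. A superalgebra is a $\mathbb{Z}_2$-graded algebra $A=A_0\oplus A_1$ with $A_iA_j\subseteq A_{i+j \bmod 2}$; $|x|\in\{0,1\}$ is the degree of a homogeneous $x$. It has type $(n,m)$ if $\dim A_0=n$, $\dim A_1=m$. The associator is $(x,y,z)=(xy)z-x(yz)$. A $\mathfrak{perm}$ superalgebra is a superalgebra satisfying $(x,y,z)=0$ and $x(yz)=(-1)^{|y||z|}x(zy)$ for all homogeneous $x,y,z$. A binary $\mathfrak{perm}$ superalgebra is a superalgebra satisfying, for all homogeneous $x,y,z$: $(x,y,z)=-(-1)^{|y||z|}(x,z,y)=-(-1)^{|x||y|}(y,x,z)$ and $(xy)z+(-1)^{|x||y|+|x||z|+|y||z|}(zy)x=(-1)^{|y||z|}(xz)y+(-1)^{|x||z|+|y||z|}(zx)y$. *)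

theory Defs
  imports Complex_Main
begin

definition grade :: "'a set \<Rightarrow> 'a set \<Rightarrow> nat \<Rightarrow> 'a set" where
  "grade A0 A1 d = (if d = 0 then A0 else A1)"

definition bilinear_prod ::
  "(complex \<Rightarrow> 'a::ab_group_add \<Rightarrow> 'a) \<Rightarrow> ('a \<Rightarrow> 'a \<Rightarrow> 'a) \<Rightarrow> bool" where
  "bilinear_prod sc m \<longleftrightarrow>
     (\<forall>x y z. m (x + y) z = m x z + m y z) \<and>
     (\<forall>x y z. m x (y + z) = m x y + m x z) \<and>
     (\<forall>c x y. m (sc c x) y = sc c (m x y)) \<and>
     (\<forall>c x y. m x (sc c y) = sc c (m x y))"

definition superalgebra_of_type ::
  "(complex \<Rightarrow> 'a::ab_group_add \<Rightarrow> 'a) \<Rightarrow> ('a \<Rightarrow> 'a \<Rightarrow> 'a) \<Rightarrow> 'a set \<Rightarrow> 'a set \<Rightarrow> nat \<Rightarrow> nat \<Rightarrow> bool" where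
  "superalgebra_of_type sc m A0 A1 n k \<longleftrightarrow>
     vector_space sc \<and> bilinear_prod sc m \<and>
     module.subspace sc A0 \<and> module.subspace sc A1 \<and>
     A0 \<inter> A1 = {0} \<and> (\<forall>x. \<exists>a\<in>A0. \<exists>b\<in>A1. x = a + b) \<and>
     vector_space.dim sc A0 = n \<and> vector_space.dim sc A1 = k \<and>
     (\<forall>i<2. \<forall>j<2. \<forall>x\<in>grade A0 A1 i. \<forall>y\<in>grade A0 A1 j. m x y \<in> grade A0 A1 ((i + j) mod 2))"

definition assoc :: "('a::ab_group_add \<Rightarrow> 'a \<Rightarrow> 'a) \<Rightarrow> 'a \<Rightarrow> 'a \<Rightarrow> 'a \<Rightarrow> 'a" where
  "assoc m x y z = m (m x y) z - m x (m y z)"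

definition sgn_act :: "(complex \<Rightarrow> 'a \<Rightarrow> 'a) \<Rightarrow> nat \<Rightarrow> 'a \<Rightarrow> 'a" where
  "sgn_act sc k v = sc ((-1) ^ k) v"

definition perm_super ::
  "(complex \<Rightarrow> 'a::ab_group_add \<Rightarrow> 'a) \<Rightarrow> ('a \<Rightarrow> 'a \<Rightarrow> 'a) \<Rightarrow> 'a set \<Rightarrow> 'a set \<Rightarrow> bool" where
  "perm_super sc m A0 A1 \<longleftrightarrow>
    (\<forall>dx<2. \<forall>dy<2. \<forall>dz<2. \<forall>x\<in>grade A0 A1 dx. \<forall>y\<in>grade A0 A1 dy. \<forall>z\<in>grade A0 A1 dz.
       assoc m x y z = 0 \<and>
       m x (m y z) = sgn_act sc (dy * dz) (m x (m z y)))"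

definition binary_perm_super ::
  "(complex \<Rightarrow> 'a::ab_group_add \<Rightarrow> 'a) \<Rightarrow> ('a \<Rightarrow> 'a \<Rightarrow> 'a) \<Rightarrow> 'a set \<Rightarrow> 'a set \<Rightarrow> bool" where
  "binary_perm_super sc m A0 A1 \<longleftrightarrow>
    (\<forall>dx<2. \<forall>dy<2. \<forall>dz<2. \<forall>x\<in>grade A0 A1 dx. \<forall>y\<in>grade A0 A1 dy. \<forall>z\<in>grade A0 A1 dz.
       assoc m x y z = - sgn_act sc (dy * dz) (assoc m x z y) \<and>
       assoc m x y z = - sgn_act sc (dx * dy) (assoc m y x z) \<and>
       m (m x y) z + sgn_act sc (dx * dy + dx * dz + dy * dz) (m (m z y) x)
         = sgn_act sc (dy * dz) (m (m x z) y) + sgn_act sc (dx * dz + dy * dz) (m (m z x) y))"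

end

theory Submission
  imports Defs
begin

(* In the even part A0 all signs of the graded identities are +, so the associator is a trilinear
   map vanishing whenever two of its arguments coincide; on a space spanned by two vectors such a
   map is zero, hence A0 is associative. Associativity turns the third identity into invariance of
   x(yz) - x(zy) under cyclic permutation, and since this vanishes for y = z, the same argument
   makes A0 a perm algebra.
   The odd part is the line spanned by f, so a f = left_coeff(a) f and f a = right_coeff(a) f for
   even a. Then (af)b = a(fb) holds outright, the first two identities carry this to the other
   associators with one odd argument, and the third one yields
   left_coeff a * left_coeff b = left_coeff a * right_coeff b. Combined with the identities for two
   odd arguments this forces f f to annihilate both A0 and f, which settles every identity with an
   odd argument. *)

definition trilinear :: "('s \<Rightarrow> 'a::ab_group_add \<Rightarrow> 'a) \<Rightarrow> ('a \<Rightarrow> 'a \<Rightarrow> 'a \<Rightarrow> 'a) \<Rightarrow> bool" where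
  "trilinear sc T \<longleftrightarrow>
     (\<forall>x x' y z. T (x + x') y z = T x y z + T x' y z) \<and>
     (\<forall>x y y' z. T x (y + y') z = T x y z + T x y' z) \<and>
     (\<forall>x y z z'. T x y (z + z') = T x y z + T x y z') \<and>
     (\<forall>c x y z. T (sc c x) y z = sc c (T x y z)) \<and>
     (\<forall>c x y z. T x (sc c y) z = sc c (T x y z)) \<and>
     (\<forall>c x y z. T x y (sc c z) = sc c (T x y z))"

lemma trilinearD:
  assumes "trilinear sc T"
  shows "T (x + x') y z = T x y z + T x' y z"
    and "T x (y + y') z = T x y z + T x y' z"
    and "T x y (z + z') = T x y z + T x y z'"
    and "T (sc c x) y z = sc c (T x y z)"
    and "T x (sc c y) z = sc c (T x y z)"
    and "T x y (sc c z) = sc c (T x y z)"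
  using assms unfolding trilinear_def by simp_all

definition perm_defect :: "('a::ab_group_add \<Rightarrow> 'a \<Rightarrow> 'a) \<Rightarrow> 'a \<Rightarrow> 'a \<Rightarrow> 'a \<Rightarrow> 'a" where
  "perm_defect m x y z = m x (m y z) - m x (m z y)"

context vector_space
begin

lemma span_pair: "span {u, v} = {scale a u + scale b v | a b. True}"
  unfolding span_insert span_singleton by (force simp: algebra_simps)

lemma trilinear_eq_0_on_span_pair:
  assumes T: "trilinear scale T"
    and spanned: "a \<in> S" "b \<in> S" "S \<subseteq> span {a, b}"
    and repeated: "\<And>u w. u \<in> S \<Longrightarrow> w \<in> S \<Longrightarrow> T u u w = 0 \<and> T u w u = 0 \<and> T w u u = 0"
    and "x \<in> S" "y \<in> S" "z \<in> S"
  shows "T x y z = 0"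
proof -
  have basis_values: "T u v w = 0" if "u \<in> {a, b}" "v \<in> {a, b}" "w \<in> {a, b}" for u v w
    using that repeated spanned by auto
  have "x \<in> span {a, b}" "y \<in> span {a, b}" "z \<in> span {a, b}"
    using assms(6-8) spanned(3) by auto
  then obtain c1 d1 c2 d2 c3 d3 where
    "x = scale c1 a + scale d1 b" "y = scale c2 a + scale d2 b" "z = scale c3 a + scale d3 b"
    unfolding span_pair by blast
  then show ?thesis by (simp add: trilinearD[OF T] basis_values)
qed

lemma spanning_pair_of_dim_2:
  assumes "dim S = 2"
  obtains e1 e2 where "e1 \<in> S" "e2 \<in> S" "S \<subseteq> span {e1, e2}"
proof -
  obtain B where "B \<subseteq> S" "S \<subseteq> span B" "card B = 2"
    using basis_exists assms by metis
  then show thesis using that card_2_iff[of B] by auto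
qed

lemma spanning_vector_of_dim_1:
  assumes "dim S = 1"
  obtains f where "f \<in> S" "f \<noteq> 0" "S \<subseteq> span {f}"
proof -
  obtain B where "B \<subseteq> S" "independent B" "S \<subseteq> span B" "card B = 1"
    using basis_exists assms by metis
  then show thesis using that card_1_singleton_iff[of B] by auto
qed

end

locale graded_algebra = vector_space sc for sc :: "complex \<Rightarrow> 'a::ab_group_add \<Rightarrow> 'a" +
  fixes m :: "'a \<Rightarrow> 'a \<Rightarrow> 'a" and A0 A1 :: "'a set"
  assumes bilinear: "bilinear_prod sc m"
    and graded: "\<forall>i<2. \<forall>j<2. \<forall>x\<in>grade A0 A1 i. \<forall>y\<in>grade A0 A1 j. m x y \<in> grade A0 A1 ((i + j) mod 2)"
begin

lemma mult_add_left: "m (x + y) z = m x z + m y z"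
  and mult_add_right: "m x (y + z) = m x y + m x z"
  and mult_scale_left: "m (sc c x) y = sc c (m x y)"
  and mult_scale_right: "m x (sc c y) = sc c (m x y)"
  using bilinear unfolding bilinear_prod_def by blast+

lemma mult_zero_left: "m 0 x = 0" and mult_zero_right: "m x 0 = 0"
  using mult_scale_left[of 0 0 x] mult_scale_right[of x 0 0] by simp_all

lemma mult_even_odd: "x \<in> A0 \<Longrightarrow> y \<in> A1 \<Longrightarrow> m x y \<in> A1"
  and mult_odd_even: "x \<in> A1 \<Longrightarrow> y \<in> A0 \<Longrightarrow> m x y \<in> A1"
  and mult_odd_odd: "x \<in> A1 \<Longrightarrow> y \<in> A1 \<Longrightarrow> m x y \<in> A0"
  using graded[rule_format, of 0 1 x y] graded[rule_format, of 1 0 x y] graded[rule_format, of 1 1 x y]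
  by (simp_all add: grade_def)

lemma trilinear_assoc: "trilinear sc (assoc m)"
  unfolding trilinear_def assoc_def
  by (simp add: mult_add_left mult_add_right mult_scale_left mult_scale_right algebra_simps)

lemma trilinear_perm_defect: "trilinear sc (perm_defect m)"
  unfolding trilinear_def perm_defect_def
  by (simp add: mult_add_left mult_add_right mult_scale_left mult_scale_right algebra_simps)

lemma sgn_act_eq: "sgn_act sc k v = (if even k then v else - v)"
  unfolding sgn_act_def by simp

lemma eq_neg_self_iff: "(v::'a) = - v \<longleftrightarrow> v = 0"
proof
  assume "v = - v"
  then have "sc 2 v = 0"
    using scale_left_distrib[of 1 1 v] by (simp add: eq_neg_iff_add_eq_0)
  then show "v = 0" by simp
qed simp

lemma homogeneous_iff: "x \<in> A0 \<union> A1 \<longleftrightarrow> (\<exists>d<2. x \<in> grade A0 A1 d)"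
proof
  assume "x \<in> A0 \<union> A1"
  then show "\<exists>d<2. x \<in> grade A0 A1 d"
    unfolding grade_def by (cases "x \<in> A0") (force, force)
qed (auto simp: grade_def split: if_splits)

lemma perm_superI:
  assumes "\<And>x y z. x \<in> A0 \<union> A1 \<Longrightarrow> y \<in> A0 \<union> A1 \<Longrightarrow> z \<in> A0 \<union> A1 \<Longrightarrow> assoc m x y z = 0"
    and "\<And>x y z. x \<in> A0 \<union> A1 \<Longrightarrow> y \<in> A0 \<union> A1 \<Longrightarrow> z \<in> A0 \<union> A1 \<Longrightarrow> y \<in> A0 \<or> z \<in> A0 \<Longrightarrow>
        perm_defect m x y z = 0"
    and "\<And>x y z. x \<in> A0 \<union> A1 \<Longrightarrow> y \<in> A1 \<Longrightarrow> z \<in> A1 \<Longrightarrow> m x (m y z) = - m x (m z y)"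
  shows "perm_super sc m A0 A1"
  unfolding perm_super_def
proof (intro allI impI ballI conjI)
  fix dx dy dz x y z
  assume "dx < 2" and dy: "dy < 2" and dz: "dz < 2"
    and grades: "x \<in> grade A0 A1 dx" "y \<in> grade A0 A1 dy" "z \<in> grade A0 A1 dz"
  then have homogeneous: "x \<in> A0 \<union> A1" "y \<in> A0 \<union> A1" "z \<in> A0 \<union> A1"
    using homogeneous_iff by blast+
  then show "assoc m x y z = 0" by (rule assms(1))
  show "m x (m y z) = sgn_act sc (dy * dz) (m x (m z y))"
  proof (cases "even (dy * dz)")
    case True
    then have "dy = 0 \<or> dz = 0"
      using dy dz by (auto simp: less_2_cases_iff)
    then have "y \<in> A0 \<or> z \<in> A0"
      using grades by (auto simp: grade_def)
    then show ?thesis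
      using True assms(2)[OF homogeneous] by (simp add: sgn_act_eq perm_defect_def)
  next
    case False
    then have "dy = 1" "dz = 1"
      using dy dz by (auto simp: less_2_cases_iff)
    then have "y \<in> A1" "z \<in> A1"
      using grades by (simp_all add: grade_def)
    then show ?thesis
      using False assms(3)[OF homogeneous(1) \<open>y \<in> A1\<close> \<open>z \<in> A1\<close>] by (simp add: sgn_act_eq)
  qed
qed

end

locale binary_perm_algebra = graded_algebra +
  assumes binary_perm: "binary_perm_super sc m A0 A1"
begin

lemma binary_perm_identities:
  assumes "dx < 2" "dy < 2" "dz < 2"
    and "x \<in> grade A0 A1 dx" "y \<in> grade A0 A1 dy" "z \<in> grade A0 A1 dz"
  shows "assoc m x y z = - sgn_act sc (dy * dz) (assoc m x z y)"
    and "assoc m x y z = - sgn_act sc (dx * dy) (assoc m y x z)"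
    and "m (m x y) z + sgn_act sc (dx * dy + dx * dz + dy * dz) (m (m z y) x)
         = sgn_act sc (dy * dz) (m (m x z) y) + sgn_act sc (dx * dz + dy * dz) (m (m z x) y)"
  using binary_perm assms unfolding binary_perm_super_def by blast+

lemma assoc_swap_right:
  assumes "x \<in> A0 \<union> A1" "y \<in> A0" "z \<in> A0 \<union> A1"
  shows "assoc m x y z = - assoc m x z y"
proof -
  obtain dx dz where "dx < 2" "x \<in> grade A0 A1 dx" "dz < 2" "z \<in> grade A0 A1 dz"
    using assms(1,3) homogeneous_iff by blast
  then show ?thesis
    using binary_perm_identities(1)[of dx 0 dz x y z] assms(2) by (simp add: grade_def sgn_act_eq)
qed

lemma assoc_swap_left:
  assumes "x \<in> A0" "y \<in> A0 \<union> A1" "z \<in> A0 \<union> A1"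
  shows "assoc m x y z = - assoc m y x z"
proof -
  obtain dy dz where "dy < 2" "y \<in> grade A0 A1 dy" "dz < 2" "z \<in> grade A0 A1 dz"
    using assms(2,3) homogeneous_iff by blast
  then show ?thesis
    using binary_perm_identities(2)[of 0 dy dz x y z] assms(1) by (simp add: grade_def sgn_act_eq)
qed

lemma third_identity_even_even:
  assumes "x \<in> A0" "y \<in> A0" "z \<in> A0 \<union> A1"
  shows "m (m x y) z + m (m z y) x = m (m x z) y + m (m z x) y"
proof -
  obtain dz where "dz < 2" "z \<in> grade A0 A1 dz"
    using assms(3) homogeneous_iff by blast
  then show ?thesis
    using binary_perm_identities(3)[of 0 0 dz x y z] assms(1,2) by (simp add: grade_def sgn_act_eq)
qed

lemma third_identity_even_odd_odd:
  assumes "x \<in> A0" "y \<in> A1" "z \<in> A1"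
  shows "m (m x y) z - m (m z y) x = - m (m x z) y - m (m z x) y"
  using binary_perm_identities(3)[of 0 1 1 x y z] assms by (simp add: grade_def sgn_act_eq)

lemma assoc_even_eq_0:
  assumes spanned: "e1 \<in> A0" "e2 \<in> A0" "A0 \<subseteq> span {e1, e2}"
    and "x \<in> A0" "y \<in> A0" "z \<in> A0"
  shows "assoc m x y z = 0"
proof -
  have "assoc m u u w = 0 \<and> assoc m u w u = 0 \<and> assoc m w u u = 0" if "u \<in> A0" "w \<in> A0" for u w
  proof -
    have uuw: "assoc m u u w = 0"
      using assoc_swap_left[of u u w] that eq_neg_self_iff by simp
    moreover have "assoc m u w u = 0"
      using assoc_swap_right[of u u w] uuw that by simp
    moreover have "assoc m w u u = 0"
      using assoc_swap_right[of w u u] that eq_neg_self_iff by simp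
    ultimately show ?thesis by blast
  qed
  then show ?thesis
    using trilinear_eq_0_on_span_pair[OF trilinear_assoc spanned] assms(4-6) by blast
qed

lemma perm_defect_even_eq_0:
  assumes spanned: "e1 \<in> A0" "e2 \<in> A0" "A0 \<subseteq> span {e1, e2}"
    and "x \<in> A0" "y \<in> A0" "z \<in> A0"
  shows "perm_defect m x y z = 0"
proof -
  have cyclic: "perm_defect m x y z = perm_defect m z x y" if "x \<in> A0" "y \<in> A0" "z \<in> A0" for x y z
  proof -
    have "assoc m x y z = 0" "assoc m x z y = 0" "assoc m z x y = 0" "assoc m z y x = 0"
      using assoc_even_eq_0[OF spanned] that by auto
    then show ?thesis
      using third_identity_even_even[of x y z] that unfolding perm_defect_def assoc_def
      by (simp add: algebra_simps)
  qed
  have "perm_defect m u u w = 0 \<and> perm_defect m u w u = 0 \<and> perm_defect m w u u = 0"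
    if "u \<in> A0" "w \<in> A0" for u w
  proof -
    have wuu: "perm_defect m w u u = 0" unfolding perm_defect_def by simp
    moreover have uuw: "perm_defect m u u w = 0"
      using wuu cyclic[of u u w] cyclic[of w u u] that by simp
    moreover have "perm_defect m u w u = 0"
      using uuw cyclic[of u w u] that by simp
    ultimately show ?thesis by blast
  qed
  then show ?thesis
    using trilinear_eq_0_on_span_pair[OF trilinear_perm_defect spanned] assms(4-6) by blast
qed

end

locale binary_perm_algebra_odd_line = binary_perm_algebra +
  fixes f :: 'a
  assumes f_odd: "f \<in> A1" and f_nonzero: "f \<noteq> 0" and odd_line: "A1 \<subseteq> span {f}"
begin

lemma odd_eq_scale_f: "x \<in> A1 \<Longrightarrow> \<exists>c. x = sc c f"
  using odd_line unfolding span_singleton by blast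

lemma homogeneous_cases: "x \<in> A0 \<union> A1 \<Longrightarrow> x \<in> A0 \<or> (\<exists>c. x = sc c f)"
  using odd_eq_scale_f by blast

definition left_coeff :: "'a \<Rightarrow> complex" where
  "left_coeff a = (SOME c. m a f = sc c f)"

definition right_coeff :: "'a \<Rightarrow> complex" where
  "right_coeff a = (SOME c. m f a = sc c f)"

lemma mult_even_f: "a \<in> A0 \<Longrightarrow> m a f = sc (left_coeff a) f"
  unfolding left_coeff_def by (rule someI_ex) (rule odd_eq_scale_f[OF mult_even_odd[OF _ f_odd]])

lemma mult_f_even: "a \<in> A0 \<Longrightarrow> m f a = sc (right_coeff a) f"
  unfolding right_coeff_def by (rule someI_ex) (rule odd_eq_scale_f[OF mult_odd_even[OF f_odd]])

lemma assoc_even_f_even: "a \<in> A0 \<Longrightarrow> b \<in> A0 \<Longrightarrow> assoc m a f b = 0"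
  unfolding assoc_def by (simp add: mult_even_f mult_f_even mult_scale_left mult_scale_right mult.commute)

lemma assoc_even_even_f: "a \<in> A0 \<Longrightarrow> b \<in> A0 \<Longrightarrow> assoc m a b f = 0"
  using assoc_swap_right[of a b f] assoc_even_f_even f_odd by simp

lemma assoc_f_even_even: "a \<in> A0 \<Longrightarrow> b \<in> A0 \<Longrightarrow> assoc m f a b = 0"
  using assoc_swap_left[of a f b] assoc_even_f_even f_odd by simp

lemma left_coeff_mult:
  assumes a: "a \<in> A0" and b: "b \<in> A0"
  shows "left_coeff a * left_coeff b = left_coeff a * right_coeff b"
proof -
  have "m (m a b) f = m a (m b f)"
    using assoc_even_even_f[OF a b] unfolding assoc_def by simp
  then have "sc (left_coeff b * left_coeff a) f + sc (right_coeff b * right_coeff a) f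
      = sc (left_coeff a * right_coeff b) f + sc (right_coeff a * right_coeff b) f"
    using third_identity_even_even[of a b f] a b f_odd
    by (simp add: mult_even_f mult_f_even mult_scale_left mult_scale_right)
  then have "sc (left_coeff b * left_coeff a + right_coeff b * right_coeff a) f
      = sc (left_coeff a * right_coeff b + right_coeff a * right_coeff b) f"
    by (simp add: scale_left_distrib)
  then show ?thesis
    using f_nonzero by (simp add: algebra_simps)
qed

lemma fsq_even_products:
  assumes a: "a \<in> A0"
  shows "m a (m f f) = sc (right_coeff a) (m f f)"
    and "m (m f f) a = sc (left_coeff a) (m f f)"
    and "sc (right_coeff a) (m f f) = - sc (left_coeff a) (m f f)"
proof -
  define X Y where "X = sc (left_coeff a) (m f f)" and "Y = sc (right_coeff a) (m f f)"
  have aff: "assoc m a f f = X - m a (m f f)"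
    unfolding assoc_def X_def by (simp add: mult_even_f a mult_scale_left)
  have faf: "assoc m f a f = Y - X"
    unfolding assoc_def X_def Y_def by (simp add: mult_even_f mult_f_even a mult_scale_left mult_scale_right)
  have ffa: "assoc m f f a = m (m f f) a - Y"
    unfolding assoc_def Y_def by (simp add: mult_f_even a mult_scale_right)
  show "m a (m f f) = Y"
    using assoc_swap_left[of a f f] a f_odd aff faf by (simp add: algebra_simps)
  show ua: "m (m f f) a = X"
    using assoc_swap_right[of f a f] a f_odd faf ffa by (simp add: algebra_simps)
  have "X - m (m f f) a = - X - Y"
    using third_identity_even_odd_odd[of a f f] a f_odd unfolding X_def Y_def
    by (simp add: mult_even_f mult_f_even mult_scale_left)
  then show "Y = - X"
    using ua by (simp add: algebra_simps eq_neg_iff_add_eq_0 add.commute)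
qed

lemma fsq_even_products_eq_0:
  assumes a: "a \<in> A0"
  shows "sc (left_coeff a) (m f f) = 0" and "sc (right_coeff a) (m f f) = 0"
    and "m a (m f f) = 0" and "m (m f f) a = 0"
proof -
  have "left_coeff a = 0 \<or> left_coeff a = right_coeff a"
    using left_coeff_mult[OF a a] by (metis mult_left_cancel)
  then show left: "sc (left_coeff a) (m f f) = 0"
  proof
    assume eq: "left_coeff a = right_coeff a"
    have "sc (left_coeff a) (m f f) = - sc (left_coeff a) (m f f)"
      using fsq_even_products(3)[OF a] unfolding eq .
    then show ?thesis using eq_neg_self_iff by blast
  qed simp
  then show "sc (right_coeff a) (m f f) = 0" "m a (m f f) = 0" "m (m f f) a = 0"
    using fsq_even_products[OF a] by simp_all
qed

lemma fsq_mult_f: "m (m f f) f = 0" and f_mult_fsq: "m f (m f f) = 0"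
proof -
  have fsq: "m f f \<in> A0"
    using mult_odd_odd[OF f_odd f_odd] .
  have "left_coeff (m f f) = 0 \<and> right_coeff (m f f) = 0 \<or> m f f = 0"
    using fsq_even_products_eq_0(1,2)[OF fsq] by auto
  then show "m (m f f) f = 0" "m f (m f f) = 0"
    using mult_even_f[OF fsq] mult_f_even[OF fsq] by (auto simp: mult_zero_left mult_zero_right)
qed

lemma trilinear_eq_0_on_homogeneous:
  assumes T: "trilinear sc T"
    and even: "\<And>a b c. a \<in> A0 \<Longrightarrow> b \<in> A0 \<Longrightarrow> c \<in> A0 \<Longrightarrow> T a b c = 0"
    and one_odd: "\<And>a b. a \<in> A0 \<Longrightarrow> b \<in> A0 \<Longrightarrow> T a b f = 0 \<and> T a f b = 0 \<and> T f a b = 0"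
    and two_odd: "\<And>a. a \<in> A0 \<Longrightarrow> T a f f = 0 \<and> T f a f = 0 \<and> T f f a = 0"
    and three_odd: "T f f f = 0"
    and "x \<in> A0 \<union> A1" "y \<in> A0 \<union> A1" "z \<in> A0 \<union> A1"
  shows "T x y z = 0"
  using homogeneous_cases[OF assms(6)] homogeneous_cases[OF assms(7)] homogeneous_cases[OF assms(8)]
  by (elim disjE exE) (simp_all add: trilinearD(4-6)[OF T] even one_odd two_odd three_odd)

lemma assoc_homogeneous_eq_0:
  assumes "\<And>a b c. a \<in> A0 \<Longrightarrow> b \<in> A0 \<Longrightarrow> c \<in> A0 \<Longrightarrow> assoc m a b c = 0"
    and "x \<in> A0 \<union> A1" "y \<in> A0 \<union> A1" "z \<in> A0 \<union> A1"
  shows "assoc m x y z = 0"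
proof (rule trilinear_eq_0_on_homogeneous[OF trilinear_assoc assms(1) _ _ _ assms(2-4)])
  show "assoc m a b f = 0 \<and> assoc m a f b = 0 \<and> assoc m f a b = 0" if "a \<in> A0" "b \<in> A0" for a b
    using assoc_even_even_f assoc_even_f_even assoc_f_even_even that by blast
  show "assoc m a f f = 0 \<and> assoc m f a f = 0 \<and> assoc m f f a = 0" if "a \<in> A0" for a
    using fsq_even_products_eq_0[OF that] unfolding assoc_def
    by (simp add: mult_even_f mult_f_even that mult_scale_left mult_scale_right del: scale_eq_0_iff)
  show "assoc m f f f = 0"
    unfolding assoc_def by (simp add: fsq_mult_f f_mult_fsq)
qed

lemma perm_defect_homogeneous_eq_0:
  assumes "\<And>a b c. a \<in> A0 \<Longrightarrow> b \<in> A0 \<Longrightarrow> c \<in> A0 \<Longrightarrow> perm_defect m a b c = 0"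
    and "x \<in> A0 \<union> A1" "y \<in> A0 \<union> A1" "z \<in> A0 \<union> A1"
  shows "perm_defect m x y z = 0"
proof (rule trilinear_eq_0_on_homogeneous[OF trilinear_perm_defect assms(1) _ _ _ assms(2-4)])
  show "perm_defect m a b f = 0 \<and> perm_defect m a f b = 0 \<and> perm_defect m f a b = 0"
    if a: "a \<in> A0" and b: "b \<in> A0" for a b
  proof -
    have "m f (m a b) = m (m f a) b" "m f (m b a) = m (m f b) a"
      using assoc_f_even_even[OF a b] assoc_f_even_even[OF b a] unfolding assoc_def by simp_all
    then show ?thesis
      using left_coeff_mult[OF a b] unfolding perm_defect_def
      by (auto simp add: mult_even_f mult_f_even a b mult_scale_left mult_scale_right mult.commute)
  qed
  show "perm_defect m a f f = 0 \<and> perm_defect m f a f = 0 \<and> perm_defect m f f a = 0" if "a \<in> A0" for a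
    using fsq_even_products_eq_0[OF that] unfolding perm_defect_def
    by (simp add: mult_even_f mult_f_even that mult_scale_right del: scale_eq_0_iff)
  show "perm_defect m f f f = 0"
    unfolding perm_defect_def by simp
qed

lemma perm_super_if_even_part:
  assumes "\<And>a b c. a \<in> A0 \<Longrightarrow> b \<in> A0 \<Longrightarrow> c \<in> A0 \<Longrightarrow> assoc m a b c = 0"
    and "\<And>a b c. a \<in> A0 \<Longrightarrow> b \<in> A0 \<Longrightarrow> c \<in> A0 \<Longrightarrow> perm_defect m a b c = 0"
  shows "perm_super sc m A0 A1"
proof (rule perm_superI)
  show "assoc m x y z = 0" if "x \<in> A0 \<union> A1" "y \<in> A0 \<union> A1" "z \<in> A0 \<union> A1" for x y z
    using assoc_homogeneous_eq_0[OF assms(1) that] .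
  show "perm_defect m x y z = 0" if "x \<in> A0 \<union> A1" "y \<in> A0 \<union> A1" "z \<in> A0 \<union> A1" for x y z
    using perm_defect_homogeneous_eq_0[OF assms(2) that] .
  show "m x (m y z) = - m x (m z y)" if x: "x \<in> A0 \<union> A1" and "y \<in> A1" "z \<in> A1" for x y z
  proof -
    have "m x (m f f) = 0"
      using homogeneous_cases[OF x] fsq_even_products_eq_0(3) f_mult_fsq by (auto simp: mult_scale_left)
    moreover obtain c d where "y = sc c f" "z = sc d f"
      using odd_eq_scale_f \<open>y \<in> A1\<close> \<open>z \<in> A1\<close> by blast
    ultimately show ?thesis by (simp add: mult_scale_left mult_scale_right)
  qed
qed

end

theorem mainTheorem17:
  fixes sc :: "complex \<Rightarrow> 'a::ab_group_add \<Rightarrow> 'a"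
    and m :: "'a \<Rightarrow> 'a \<Rightarrow> 'a"
    and A0 A1 :: "'a set"
  assumes "superalgebra_of_type sc m A0 A1 2 1"
    and "binary_perm_super sc m A0 A1"
  shows "perm_super sc m A0 A1"
proof -
  have dims: "vector_space.dim sc A0 = 2" "vector_space.dim sc A1 = 1"
    using assms(1) unfolding superalgebra_of_type_def by simp_all
  interpret binary_perm_algebra sc m A0 A1
    using assms unfolding superalgebra_of_type_def binary_perm_algebra_def graded_algebra_def
      binary_perm_algebra_axioms_def graded_algebra_axioms_def by blast
  obtain e1 e2 where even_basis: "e1 \<in> A0" "e2 \<in> A0" "A0 \<subseteq> span {e1, e2}"
    using spanning_pair_of_dim_2[OF dims(1)] .
  obtain f where "f \<in> A1" "f \<noteq> 0" "A1 \<subseteq> span {f}"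
    using spanning_vector_of_dim_1[OF dims(2)] .
  then interpret binary_perm_algebra_odd_line sc m A0 A1 f
    by unfold_locales
  show ?thesis
    using perm_super_if_even_part assoc_even_eq_0[OF even_basis] perm_defect_even_eq_0[OF even_basis]
    by blast
qed

end
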